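(* Let $D$ be a pv-monoid (idempotent, with symmetric valuation function) that is right-$\oplus$-distributive, $P$ a nonempty finite set of ports, and $\zeta,\zeta_1,\zeta_2\in PCL(D,P)$. Then $(\zeta_1\oplus\zeta_2)\uplus\zeta\equiv(\zeta_1\uplus\zeta)\oplus(\zeta_2\uplus\zeta)$.
   Context: A valuation monoid $(D,\oplus,\mathrm{val},0)$ consists of a commutative monoid $(D,\oplus,0)$ and a map $\mathrm{val}:D^+\to D$ ($D^+$ = nonempty finite sequences over $D$) with $\mathrm{val}(d)=d$ and $\mathrm{val}(d_1,\dots,d_n)=0$ whenever some $d_i=0$. A pv-monoid $(D,\oplus,\mathrm{val},\otimes,0,1)$ is a valuation monoid with a binary operation $\otimes$ and an element $1$ such that $\mathrm{val}(1,\dots,1)=1$ for any $n\ge1$ arguments, $0\otimes d=d\otimes0=0$, $1\otimes d=d\otimes1=d$. Standing assumption: $D$ is idempotent and $\mathrm{val}$ is symmetric. $D$ is right-$\oplus$-distributive if $(d_1\oplus d_2)\otimes d=(d_1\otimes d)\oplus(d_2\otimes d)$ for all $d,d_1,d_2$. $I(P)$ is the set of nonempty subsets of $P$, $C(P)$ the set of nonempty subsets of $I(P)$. PIL formulas: $\phi::=true\mid p\mid\overline{\phi}\mid\phi\vee\phi$ ($p\in P$), $\alpha\models_i p$ iff $p\in\alpha$, other connectives as usual. PCL formulas: $f::=true\mid\phi\mid\neg f\mid f\sqcup f\mid f+f$; $\gamma\models\phi$ iff every $\alpha\in\gamma$ satisfies $\phi$; $\neg,\sqcup$ are complement and union; $\gamma\models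 f_1+f_2$ iff $\gamma=\gamma_1\cup\gamma_2$ with $\gamma_1,\gamma_2\in C(P)$, $\gamma_1\models f_1,\gamma_2\models f_2$. w$_{\text{pvm}}$PCL formulas ($PCL(D,P)$): $\zeta::=d\mid f\mid\zeta\oplus\zeta\mid\zeta\otimes\zeta\mid\zeta\uplus\zeta\mid *\zeta$; semantics $\|\zeta\|:C(P)\to D$: $\|d\|(\gamma)=d$; $\|f\|(\gamma)\in\{0,1\}$ is $1$ iff $\gamma\models f$; $\oplus,\otimes$ pointwise; $\|\zeta_1\uplus\zeta_2\|(\gamma)=\bigoplus(\|\zeta_1\|(\gamma_1)\otimes\|\zeta_2\|(\gamma_2))$ over disjoint $\gamma_1,\gamma_2\in C(P)$ with union $\gamma$; $\|*\zeta\|(\gamma)=\bigoplus_{n>0}\bigoplus\mathrm{val}(\|\zeta\|(\gamma_1),\dots,\|\zeta\|(\gamma_n))$ over pairwise disjoint $\gamma_1,\dots,\gamma_n\in C(P)$ with union $\gamma$. $\equiv$ means equality of semantics on all of $C(P)$. An empty $\oplus$-sum is $0$. *)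

theory Defs
  imports "HOL-Library.Multiset"
begin

record 'd pvm =
  add  :: "'d \<Rightarrow> 'd \<Rightarrow> 'd"
  zer  :: 'd
  val  :: "'d list \<Rightarrow> 'd"
  mul  :: "'d \<Rightarrow> 'd \<Rightarrow> 'd"
  one  :: 'd

text \<open>valuation monoid; val is only meaningful on nonempty lists\<close>
definition valuation_monoid :: "'d pvm \<Rightarrow> bool" where
  "valuation_monoid D \<longleftrightarrow>
     (\<forall>a b c. add D (add D a b) c = add D a (add D b c)) \<and>
     (\<forall>a b. add D a b = add D b a) \<and>
     (\<forall>a. add D (zer D) a = a) \<and>
     (\<forall>d. val D [d] = d) \<and>
     (\<forall>ds. ds \<noteq> [] \<and> zer D \<in> set ds \<longrightarrow> val D ds = zer D)"

definition pv_monoid :: "'d pvm \<Rightarrow> bool" where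
  "pv_monoid D \<longleftrightarrow> valuation_monoid D \<and>
     (\<forall>n. n \<ge> 1 \<longrightarrow> val D (replicate n (one D)) = one D) \<and>
     (\<forall>d. mul D (zer D) d = zer D \<and> mul D d (zer D) = zer D) \<and>
     (\<forall>d. mul D (one D) d = d \<and> mul D d (one D) = d)"

definition idempotent_pvm :: "'d pvm \<Rightarrow> bool" where
  "idempotent_pvm D \<longleftrightarrow> (\<forall>d. add D d d = d)"

definition symmetric_val :: "'d pvm \<Rightarrow> bool" where
  "symmetric_val D \<longleftrightarrow> (\<forall>xs ys. xs \<noteq> [] \<and> mset xs = mset ys \<longrightarrow> val D xs = val D ys)"

definition right_add_distributive :: "'d pvm \<Rightarrow> bool" where
  "right_add_distributive D \<longleftrightarrow>
     (\<forall>d d1 d2. mul D (add D d1 d2) d = add D (mul D d1 d) (mul D d2 d))"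

text \<open>Finite \<oplus>-sum of a finite set of values (D commutative, idempotent);
  the empty sum is 0.\<close>
definition bsum :: "'d pvm \<Rightarrow> 'd set \<Rightarrow> 'd" where
  "bsum D S = Finite_Set.fold (add D) (zer D) S"

definition IP :: "'p set \<Rightarrow> 'p set set" where
  "IP P = {a. a \<subseteq> P \<and> a \<noteq> {}}"

definition CP :: "'p set \<Rightarrow> 'p set set set" where
  "CP P = {g. g \<subseteq> IP P \<and> g \<noteq> {}}"

datatype 'p pil = PTrue | PPort 'p | PNeg "'p pil" | POr "'p pil" "'p pil"

fun pil_sat :: "'p set \<Rightarrow> 'p pil \<Rightarrow> bool" where
  "pil_sat \<alpha> PTrue = True"
| "pil_sat \<alpha> (PPort p) = (p \<in> \<alpha>)"
| "pil_sat \<alpha> (PNeg \<phi>) = (\<not> pil_sat \<alpha> \<phi>)"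
| "pil_sat \<alpha> (POr \<phi> \<psi>) = (pil_sat \<alpha> \<phi> \<or> pil_sat \<alpha> \<psi>)"

fun pil_ports :: "'p pil \<Rightarrow> 'p set" where
  "pil_ports PTrue = {}"
| "pil_ports (PPort p) = {p}"
| "pil_ports (PNeg \<phi>) = pil_ports \<phi>"
| "pil_ports (POr \<phi> \<psi>) = pil_ports \<phi> \<union> pil_ports \<psi>"

datatype 'p pcl = CTrue | CPil "'p pil" | CNeg "'p pcl" | CUnion "'p pcl" "'p pcl"
  | CPlus "'p pcl" "'p pcl"

fun pcl_sat :: "'p set \<Rightarrow> 'p set set \<Rightarrow> 'p pcl \<Rightarrow> bool" where
  "pcl_sat P \<gamma> CTrue = True"
| "pcl_sat P \<gamma> (CPil \<phi>) = (\<forall>\<alpha>\<in>\<gamma>. pil_sat \<alpha> \<phi>)"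
| "pcl_sat P \<gamma> (CNeg f) = (\<not> pcl_sat P \<gamma> f)"
| "pcl_sat P \<gamma> (CUnion f g) = (pcl_sat P \<gamma> f \<or> pcl_sat P \<gamma> g)"
| "pcl_sat P \<gamma> (CPlus f g) = (\<exists>\<gamma>1 \<gamma>2. \<gamma>1 \<in> CP P \<and> \<gamma>2 \<in> CP P \<and> \<gamma> = \<gamma>1 \<union> \<gamma>2
       \<and> pcl_sat P \<gamma>1 f \<and> pcl_sat P \<gamma>2 g)"

fun pcl_ports :: "'p pcl \<Rightarrow> 'p set" where
  "pcl_ports CTrue = {}"
| "pcl_ports (CPil \<phi>) = pil_ports \<phi>"
| "pcl_ports (CNeg f) = pcl_ports f"
| "pcl_ports (CUnion f g) = pcl_ports f \<union> pcl_ports g"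
| "pcl_ports (CPlus f g) = pcl_ports f \<union> pcl_ports g"

datatype ('d,'p) wpcl = WConst 'd | WPcl "'p pcl" | WPlus "('d,'p) wpcl" "('d,'p) wpcl"
  | WTimes "('d,'p) wpcl" "('d,'p) wpcl" | WShuffle "('d,'p) wpcl" "('d,'p) wpcl"
  | WStar "('d,'p) wpcl"

fun wpcl_ports :: "('d,'p) wpcl \<Rightarrow> 'p set" where
  "wpcl_ports (WConst d) = {}"
| "wpcl_ports (WPcl f) = pcl_ports f"
| "wpcl_ports (WPlus z1 z2) = wpcl_ports z1 \<union> wpcl_ports z2"
| "wpcl_ports (WTimes z1 z2) = wpcl_ports z1 \<union> wpcl_ports z2"
| "wpcl_ports (WShuffle z1 z2) = wpcl_ports z1 \<union> wpcl_ports z2"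
| "wpcl_ports (WStar z) = wpcl_ports z"

definition PCL :: "'p set \<Rightarrow> ('d,'p) wpcl set" where
  "PCL P = {z. wpcl_ports z \<subseteq> P}"

definition disj_decomps :: "'p set \<Rightarrow> 'p set set \<Rightarrow> 'p set set list set" where
  "disj_decomps P \<gamma> = {gs. gs \<noteq> [] \<and> set gs \<subseteq> CP P \<and>
     (\<forall>i j. i < length gs \<longrightarrow> j < length gs \<longrightarrow> i \<noteq> j \<longrightarrow> gs ! i \<inter> gs ! j = {}) \<and>
     \<Union>(set gs) = \<gamma>}"

fun wsem :: "'d pvm \<Rightarrow> 'p set \<Rightarrow> ('d,'p) wpcl \<Rightarrow> 'p set set \<Rightarrow> 'd" where
  "wsem D P (WConst d) \<gamma> = d"
| "wsem D P (WPcl f) \<gamma> = (if pcl_sat P \<gamma> f then one D else zer D)"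
| "wsem D P (WPlus z1 z2) \<gamma> = add D (wsem D P z1 \<gamma>) (wsem D P z2 \<gamma>)"
| "wsem D P (WTimes z1 z2) \<gamma> = mul D (wsem D P z1 \<gamma>) (wsem D P z2 \<gamma>)"
| "wsem D P (WShuffle z1 z2) \<gamma> =
     bsum D {mul D (wsem D P z1 \<gamma>1) (wsem D P z2 \<gamma>2) | \<gamma>1 \<gamma>2.
              \<gamma>1 \<in> CP P \<and> \<gamma>2 \<in> CP P \<and> \<gamma>1 \<inter> \<gamma>2 = {} \<and> \<gamma>1 \<union> \<gamma>2 = \<gamma>}"
| "wsem D P (WStar z) \<gamma> =
     bsum D {val D (map (wsem D P z) gs) | gs. gs \<in> disj_decomps P \<gamma>}"

definition wequiv :: "'d pvm \<Rightarrow> 'p set \<Rightarrow> ('d,'p) wpcl \<Rightarrow> ('d,'p) wpcl \<Rightarrow> bool" where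
  "wequiv D P z1 z2 \<longleftrightarrow> (\<forall>\<gamma>\<in>CP P. wsem D P z1 \<gamma> = wsem D P z2 \<gamma>)"

end

theory Submission
  imports Defs
begin

text \<open>The \<open>\<uplus>\<close>-semantics is a finite idempotent \<open>\<oplus>\<close>-sum over the splittings of \<open>\<gamma>\<close> into two
  disjoint members of \<open>C(P)\<close>. Right distributivity turns each summand for \<open>\<zeta>\<^sub>1 \<oplus> \<zeta>\<^sub>2\<close>
  into the \<open>\<oplus>\<close> of the summands for \<open>\<zeta>\<^sub>1\<close> and \<open>\<zeta>\<^sub>2\<close>, and in a commutative idempotent
  monoid the sum of a family of pointwise sums is the sum of the two sums.\<close>

context semilattice_neutr_set
begin

lemma image_distrib:
  assumes "finite A"
  shows "F ((\<lambda>x. g x \<^bold>* h x) ` A) = F (g ` A) \<^bold>* F (h ` A)"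
  using assms by (induction A rule: finite_induct) (simp_all add: ac_simps)

end

lemma semilattice_neutr_set_add:
  assumes "valuation_monoid D" and "idempotent_pvm D"
  shows "semilattice_neutr_set (add D) (zer D)"
  using assms unfolding valuation_monoid_def idempotent_pvm_def
  by unfold_locales auto

lemma bsum_image_add:
  assumes "valuation_monoid D" and "idempotent_pvm D" and "finite A"
  shows "bsum D ((\<lambda>x. add D (g x) (h x)) ` A) = add D (bsum D (g ` A)) (bsum D (h ` A))"
proof -
  interpret semilattice_neutr_set "add D" "zer D"
    by (rule semilattice_neutr_set_add[OF assms(1,2)])
  have "bsum D = F"
    by (simp add: fun_eq_iff bsum_def eq_fold)
  then show ?thesis
    using image_distrib[OF assms(3)] by simp
qed

lemma finite_CP: "finite P \<Longrightarrow> finite (CP P)"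
  unfolding CP_def IP_def
  by (rule finite_subset[where B = "Pow (Pow P)"]) auto

definition splits :: "'p set \<Rightarrow> 'p set set \<Rightarrow> ('p set set \<times> 'p set set) set" where
  "splits P \<gamma> = {(\<gamma>1, \<gamma>2). \<gamma>1 \<in> CP P \<and> \<gamma>2 \<in> CP P \<and> \<gamma>1 \<inter> \<gamma>2 = {} \<and> \<gamma>1 \<union> \<gamma>2 = \<gamma>}"

lemma finite_splits: "finite P \<Longrightarrow> finite (splits P \<gamma>)"
  unfolding splits_def
  by (rule finite_subset[where B = "CP P \<times> CP P"]) (auto simp: finite_CP)

lemma wsem_WShuffle_splits:
  "wsem D P (WShuffle z1 z2) \<gamma> =
     bsum D ((\<lambda>(\<gamma>1, \<gamma>2). mul D (wsem D P z1 \<gamma>1) (wsem D P z2 \<gamma>2)) ` splits P \<gamma>)"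
  unfolding wsem.simps splits_def by (rule arg_cong[where f = "bsum D"]) auto

theorem mainTheorem7:
  fixes D :: "'d pvm" and P :: "'p set" and z z1 z2 :: "('d,'p) wpcl"
  assumes "pv_monoid D" and "idempotent_pvm D" and "symmetric_val D"
    and "right_add_distributive D"
    and "finite P" and "P \<noteq> {}"
    and "z \<in> PCL P" and "z1 \<in> PCL P" and "z2 \<in> PCL P"
  shows "wequiv D P (WShuffle (WPlus z1 z2) z)
           (WPlus (WShuffle z1 z) (WShuffle z2 z))"
  unfolding wequiv_def
proof
  fix \<gamma>
  let ?summand = "\<lambda>z' (\<gamma>1, \<gamma>2). mul D (wsem D P z' \<gamma>1) (wsem D P z \<gamma>2)"
  have vm: "valuation_monoid D"
    using assms(1) by (simp add: pv_monoid_def)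
  have "?summand (WPlus z1 z2) = (\<lambda>s. add D (?summand z1 s) (?summand z2 s))"
    using assms(4) by (auto simp: fun_eq_iff right_add_distributive_def)
  then show "wsem D P (WShuffle (WPlus z1 z2) z) \<gamma>
      = wsem D P (WPlus (WShuffle z1 z) (WShuffle z2 z)) \<gamma>"
    by (simp only: wsem.simps(3) wsem_WShuffle_splits
        bsum_image_add[OF vm assms(2) finite_splits[OF assms(5)]])
qed

end
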